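(* For every closed $M\in\Lambda$, $[\![M]\!]$ is canonical. Moreover, if $t$ is canonical and $t\rightarrow u$ in $\Phi$, then $u$ is canonical.
   Context: $\lambda$-terms: $M::=x\mid\lambda x.M\mid MN$, $x$ from a denumerable set $\Upsilon$ of variables with a fixed total order; $\Lambda$ is the set of terms; $FV(M)$ is the ordered sequence (without repetitions) of free variables; $M$ is closed if it is empty. $\Phi$ is the constructor rewrite system with binary function symbol $\mathbf{app}$ and, for every $M\in\Lambda$, $x\in\Upsilon$, a constructor $c_{x,M}$ of arity the length of $FV(\lambda x.M)$. $[\![x]\!]=x$, $[\![\lambda x.M]\!]=c_{x,M}(x_1,\dots,x_n)$ with $FV(\lambda x.M)=x_1,\dots,x_n$, $[\![MN]\!]=\mathbf{app}([\![M]\!],[\![N]\!])$. Rules: $\mathbf{app}(c_{x,M}(x_1,\dots,x_n),x)\rightarrow[\![M]\!]$ with $FV(\lambda x.M)=x_1,\dots,x_n$. Rewriting is call-by-value: a step replaces anywhere a subterm $l\sigma$ by $r\sigma$, $l\rightarrow r$ a rule, $\sigma$ mapping variables to constructor terms (closed terms built only from constructors). A closed term $t$ of $\Phi$ is canonical if either $t$ is a constructor term or $t=\mathbf{app}(u,v)$ with $u,v$ canonical. *)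

theory Defs
  imports Main
begin

text \<open>Variables are natural numbers (a denumerable set with a fixed total order).\<close>
type_synonym var = nat

datatype lterm = Var var | Lam var lterm | App lterm lterm

fun fvs :: "lterm \<Rightarrow> var set" where
  "fvs (Var x) = {x}"
| "fvs (Lam x M) = fvs M - {x}"
| "fvs (App M N) = fvs M \<union> fvs N"

definition fv_list :: "lterm \<Rightarrow> var list" where
  "fv_list M = sorted_list_of_set (fvs M)"

definition closed :: "lterm \<Rightarrow> bool" where
  "closed M \<longleftrightarrow> fv_list M = []"

text \<open>Terms of Phi: variables, the binary symbol app, and constructors c_{x,M}.\<close>
datatype fterm = FVar var | Appf fterm fterm | Con var lterm "fterm list"

fun tr :: "lterm \<Rightarrow> fterm" where
  "tr (Var x) = FVar x"
| "tr (Lam x M) = Con x M (map FVar (fv_list (Lam x M)))"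
| "tr (App M N) = Appf (tr M) (tr N)"

inductive ctor_term :: "fterm \<Rightarrow> bool" where
  "length ts = length (fv_list (Lam x M)) \<Longrightarrow> (\<forall>t\<in>set ts. ctor_term t)
     \<Longrightarrow> ctor_term (Con x M ts)"

inductive canonical :: "fterm \<Rightarrow> bool" where
  "ctor_term t \<Longrightarrow> canonical t"
| "canonical u \<Longrightarrow> canonical v \<Longrightarrow> canonical (Appf u v)"

fun subst :: "(var \<Rightarrow> fterm) \<Rightarrow> fterm \<Rightarrow> fterm" where
  "subst \<sigma> (FVar x) = \<sigma> x"
| "subst \<sigma> (Appf t s) = Appf (subst \<sigma> t) (subst \<sigma> s)"
| "subst \<sigma> (Con x M ts) = Con x M (map (subst \<sigma>) ts)"

definition rule_lhs :: "var \<Rightarrow> lterm \<Rightarrow> fterm" where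
  "rule_lhs x M = Appf (Con x M (map FVar (fv_list (Lam x M)))) (FVar x)"

text \<open>Call-by-value one-step rewriting: replace anywhere l\<sigma> by r\<sigma>, where \<sigma> maps
  the variables (of the rule) to constructor terms.\<close>
inductive step :: "fterm \<Rightarrow> fterm \<Rightarrow> bool" where
  root: "(\<forall>v\<in>set (x # fv_list (Lam x M)). ctor_term (\<sigma> v))
     \<Longrightarrow> step (subst \<sigma> (rule_lhs x M)) (subst \<sigma> (tr M))"
| app1: "step t t' \<Longrightarrow> step (Appf t s) (Appf t' s)"
| app2: "step s s' \<Longrightarrow> step (Appf t s) (Appf t s')"
| con: "step t t' \<Longrightarrow> step (Con x M (ss @ t # rs)) (Con x M (ss @ t' # rs))"

end

theory Submission
  imports Defs
begin

text \<open>Instantiating the free variables of a translated lambda-term with constructor terms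
  leaves only applications on top of constructor terms. The translation of a closed term is
  such an instance (with no variables to instantiate), and so is the right-hand side of every
  root step. Constructor terms are normal forms, so a step never happens inside a constructor
  term, and a step below an application of canonical terms stays canonical by induction.\<close>

lemma finite_fvs: "finite (fvs M)"
  by (induction M) auto

lemma set_fv_list: "set (fv_list M) = fvs M"
  by (simp add: fv_list_def finite_fvs)

lemma closed_iff_fvs_empty: "closed M \<longleftrightarrow> fvs M = {}"
  by (simp add: closed_def fv_list_def finite_fvs)

lemma subst_FVar: "subst FVar t = t"
  by (induction t) (auto intro: map_idI)

lemma canonical_subst_tr:
  assumes "\<forall>v\<in>fvs M. ctor_term (\<sigma> v)"
  shows "canonical (subst \<sigma> (tr M))"
  using assms
proof (induction M)
  case (Var x)
  then show ?case by (auto intro: canonical.intros)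
next
  case (Lam y N)
  then show ?case
    by (auto simp: set_fv_list simp del: fvs.simps intro!: canonical.intros ctor_term.intros)
next
  case (App M N)
  then show ?case by (auto intro: canonical.intros)
qed

lemma canonical_tr_closed:
  assumes "closed M"
  shows "canonical (tr M)"
  using canonical_subst_tr[of M FVar] assms by (simp add: closed_iff_fvs_empty subst_FVar)

lemma ctor_term_no_step: "step t u \<Longrightarrow> \<not> ctor_term t"
  by (induction rule: step.induct) (auto simp: rule_lhs_def elim: ctor_term.cases)

lemma canonical_step:
  assumes "step t u" and "canonical t"
  shows "canonical u"
  using assms
proof (induction rule: step.induct)
  case (root x M \<sigma>)
  then have "\<forall>v\<in>fvs M. ctor_term (\<sigma> v)"
    by (auto simp: set_fv_list)
  then show ?case by (rule canonical_subst_tr)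
next
  case (app1 t t' s)
  from app1.prems show ?case
    by (cases rule: canonical.cases) (auto elim: ctor_term.cases intro: canonical.intros app1.IH)
next
  case (app2 s s' t)
  from app2.prems show ?case
    by (cases rule: canonical.cases) (auto elim: ctor_term.cases intro: canonical.intros app2.IH)
next
  case (con t t' x M ss rs)
  from con.prems have "ctor_term (Con x M (ss @ t # rs))"
    by (auto elim: canonical.cases)
  moreover from con.hyps have "step (Con x M (ss @ t # rs)) (Con x M (ss @ t' # rs))"
    by (rule step.con)
  ultimately show ?case using ctor_term_no_step by blast
qed

theorem lemma2:
  shows "(\<forall>M. closed M \<longrightarrow> canonical (tr M)) \<and>
         (\<forall>t u. canonical t \<longrightarrow> step t u \<longrightarrow> canonical u)"
  using canonical_tr_closed canonical_step by blast

end
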